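(* Let $n>1$, let $\mathbf{A}\in\mathbb{R}^{n\times n}$ be symmetric positive definite with $\mathbf{I}-\mathbf{A}$ invertible, $\mathbf{b}\in\mathbb{R}^n$, $\mathcal{FP}(\mathbf{x})=\mathbf{A}\mathbf{x}+\mathbf{b}$, and $\mathbf{x}^\star$ the unique fixed point of $\mathcal{FP}$. Let $\mathbf{v}_1,\mathbf{v}_2$ be two orthogonal eigenvectors of $\mathbf{A}$ with eigenvalues $\lambda_1,\lambda_2$, such that at most one of $\lambda_1,\lambda_2$ is larger than $1$ and none equals $1$, and let $\mathbf{x}^0$ satisfy $\mathbf{x}^0-\mathbf{x}^\star\in\mathrm{span}\{\mathbf{v}_1,\mathbf{v}_2\}$. Then the sequence $\{\mathbf{x}^i\}$ generated by AA$^\star$(1) applied to $\mathcal{FP}$ from $\mathbf{x}^0$ converges to $\mathbf{x}^\star$ (even though the fixed-point iteration $\mathcal{FP}$ itself need not be contractive).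
   Context: Let $\Delta\mathcal{FP}(\mathbf{x})=\mathcal{FP}(\mathbf{x})-\mathbf{x}$ and $\|\cdot\|$ the Euclidean norm. The restarted Anderson acceleration AA$^\star$(1) is the iteration: for $i=0,2,4,\dots$, set $\mathbf{x}^{i+1}=\mathcal{FP}(\mathbf{x}^i)$; choose $\alpha^{(i+1)}\in\mathbb{R}$ minimizing $\|\Delta\mathcal{FP}(\mathbf{x}^{i+1})+\alpha^{(i+1)}(\Delta\mathcal{FP}(\mathbf{x}^i)-\Delta\mathcal{FP}(\mathbf{x}^{i+1}))\|$; set $\mathbf{x}^{i+2}=\mathcal{FP}(\mathbf{x}^{i+1})+\alpha^{(i+1)}(\mathcal{FP}(\mathbf{x}^i)-\mathcal{FP}(\mathbf{x}^{i+1}))$. *)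

theory Defs
  imports "HOL-Analysis.Analysis"
begin

definition sym_matrix :: "real^'n^'n \<Rightarrow> bool" where
  "sym_matrix A \<longleftrightarrow> transpose A = A"

definition pos_def_matrix :: "real^'n^'n \<Rightarrow> bool" where
  "pos_def_matrix A \<longleftrightarrow> sym_matrix A \<and> (\<forall>x. x \<noteq> 0 \<longrightarrow> x \<bullet> (A *v x) > 0)"

definition DeltaFP :: "('a::real_vector \<Rightarrow> 'a) \<Rightarrow> 'a \<Rightarrow> 'a" where
  "DeltaFP FP x = FP x - x"

text \<open>The pair (x, alpha) is a run of restarted Anderson acceleration AA*(1) on FP
  started at x0: for every even i, x(i+1) = FP(x i), alpha(i+1) is a minimiser
  (any one, if it is not unique) of the least squares problem, and
  x(i+2) = FP(x(i+1)) + alpha(i+1) (FP(x i) - FP(x(i+1))).\<close>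
definition AA_star1_run ::
  "('a::real_normed_vector \<Rightarrow> 'a) \<Rightarrow> 'a \<Rightarrow> (nat \<Rightarrow> 'a) \<Rightarrow> (nat \<Rightarrow> real) \<Rightarrow> bool" where
  "AA_star1_run FP x0 x \<alpha> \<longleftrightarrow>
     x 0 = x0 \<and>
     (\<forall>i. even i \<longrightarrow>
        x (i + 1) = FP (x i) \<and>
        (\<forall>\<beta>::real.
           norm (DeltaFP FP (x (i + 1)) + \<alpha> (i + 1) *\<^sub>R (DeltaFP FP (x i) - DeltaFP FP (x (i + 1))))
           \<le> norm (DeltaFP FP (x (i + 1)) + \<beta> *\<^sub>R (DeltaFP FP (x i) - DeltaFP FP (x (i + 1))))) \<and>
        x (i + 2) = FP (x (i + 1)) + \<alpha> (i + 1) *\<^sub>R (FP (x i) - FP (x (i + 1))))"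

end

theory Submission
  imports Defs
begin

(* Write x i - xstar = c1 v1 + c2 v2. A plain step multiplies c_k by lam_k; the extrapolation
   step with weight a multiplies it by lam_k ((1 - a) lam_k + a), and optimality of a is the
   normal equation  n1 c1^2 m1^3 ((1 - a) lam1 + a) + n2 c2^2 m2^3 ((1 - a) lam2 + a) = 0
   (n_k = |v_k|^2, m_k = lam_k - 1), which determines both damping factors explicitly.
   Composing two AA cycles, both coordinates are multiplied by the same factor
     lam1^2 lam2^2 (lam2 - lam1)^2 X Y / ((X m1^2 + Y m2^2) (lam1^2 Y + lam2^2 X)),
   X = n1 c1^2 m1^2, Y = n2 c2^2 m2^2, which by Cauchy-Schwarz is at most rho^2 with
   rho = lam1 lam2 |lam2 - lam1| / (lam1 |lam1 - 1| + lam2 |lam2 - 1|). Positivity of the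
   eigenvalues and the fact that at most one exceeds 1 give rho < 1, so the coordinates decay
   geometrically every four iterations. *)

definition aa_damping :: "real \<Rightarrow> real \<Rightarrow> real" where
  "aa_damping a l = (1 - a) * l + a"

definition aa_contraction_factor :: "real \<Rightarrow> real \<Rightarrow> real" where
  "aa_contraction_factor l1 l2 =
     l1 * l2 * \<bar>l2 - l1\<bar> / (l1 * \<bar>l1 - 1\<bar> + l2 * \<bar>l2 - 1\<bar>)"

(* c1, c2 are the coordinates of x i - xstar along the eigenvectors, n1, n2 their squared
   norms; normal_equation is the optimality condition of the least squares problem. *)
locale aa_eigen_recurrence =
  fixes n1 n2 l1 l2 :: real and \<alpha> c1 c2 :: "nat \<Rightarrow> real"
  assumes weights_pos: "n1 > 0" "n2 > 0"
    and plain_step: "even i \<Longrightarrow> c1 (i + 1) = l1 * c1 i" "even i \<Longrightarrow> c2 (i + 1) = l2 * c2 i"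
    and extrapolation_step:
      "even i \<Longrightarrow> c1 (i + 2) = l1 * aa_damping (\<alpha> (i + 1)) l1 * c1 i"
      "even i \<Longrightarrow> c2 (i + 2) = l2 * aa_damping (\<alpha> (i + 1)) l2 * c2 i"
    and normal_equation: "even i \<Longrightarrow>
      n1 * c1 i^2 * (l1 - 1)^3 * aa_damping (\<alpha> (i + 1)) l1
      + n2 * c2 i^2 * (l2 - 1)^3 * aa_damping (\<alpha> (i + 1)) l2 = 0"

lemma least_squares_residual_orthogonal:
  fixes u w :: "'a::real_inner"
  assumes minimal: "\<And>\<beta>. norm (u + \<alpha> *\<^sub>R w) \<le> norm (u + \<beta> *\<^sub>R w)"
  shows "(u + \<alpha> *\<^sub>R w) \<bullet> w = 0"
proof (cases "w = 0")
  case False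
  define r where "r = u + \<alpha> *\<^sub>R w"
  define t where "t = - (r \<bullet> w) / (w \<bullet> w)"
  have "w \<bullet> w > 0" using False by simp
  have "norm r^2 \<le> norm (r + t *\<^sub>R w)^2"
    using minimal[of "\<alpha> + t"] by (simp add: r_def algebra_simps)
  also have "\<dots> = norm r^2 + 2 * t * (r \<bullet> w) + t^2 * (w \<bullet> w)"
    unfolding power2_norm_eq_inner
    by (simp add: inner_add_left inner_add_right inner_commute power2_eq_square algebra_simps)
  also have "\<dots> = norm r^2 - (r \<bullet> w)^2 / (w \<bullet> w)"
    using \<open>w \<bullet> w > 0\<close> by (simp add: t_def field_simps power2_eq_square)
  finally have "(r \<bullet> w)^2 / (w \<bullet> w) \<le> 0" by simp
  hence "(r \<bullet> w)^2 \<le> 0" using \<open>w \<bullet> w > 0\<close> by (simp add: divide_le_0_iff)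
  thus ?thesis unfolding r_def by simp
qed simp

lemma scaleR_pair_diff:
  fixes v1 v2 :: "'a::real_vector"
  shows "(a1 *\<^sub>R v1 + a2 *\<^sub>R v2) - (b1 *\<^sub>R v1 + b2 *\<^sub>R v2) = (a1 - b1) *\<^sub>R v1 + (a2 - b2) *\<^sub>R v2"
  by (simp add: algebra_simps)

lemma scaleR_pair_affine_combination:
  fixes v1 v2 :: "'a::real_vector"
  shows "(a1 *\<^sub>R v1 + a2 *\<^sub>R v2) + t *\<^sub>R ((b1 *\<^sub>R v1 + b2 *\<^sub>R v2) - (a1 *\<^sub>R v1 + a2 *\<^sub>R v2))
    = (a1 + t * (b1 - a1)) *\<^sub>R v1 + (a2 + t * (b2 - a2)) *\<^sub>R v2"
  by (simp add: algebra_simps)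

locale aa_eigenplane_run =
  fixes FP L :: "'a::real_inner \<Rightarrow> 'a" and xstar x0 v1 v2 :: 'a and l1 l2 :: real
    and x :: "nat \<Rightarrow> 'a" and \<alpha> :: "nat \<Rightarrow> real"
  assumes linear: "linear L"
    and FP_affine: "FP y = xstar + L (y - xstar)"
    and eigen: "L v1 = l1 *\<^sub>R v1" "L v2 = l2 *\<^sub>R v2"
    and nonzero: "v1 \<noteq> 0" "v2 \<noteq> 0" and orthogonal: "v1 \<bullet> v2 = 0"
    and start: "x0 - xstar \<in> span {v1, v2}"
    and run: "AA_star1_run FP x0 x \<alpha>"
begin

lemma L_eigenplane: "L (p *\<^sub>R v1 + q *\<^sub>R v2) = (l1 * p) *\<^sub>R v1 + (l2 * q) *\<^sub>R v2"
  by (simp add: linear_add[OF linear] linear_scale[OF linear] eigen ac_simps)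

lemma DeltaFP_eq: "DeltaFP FP y = L (y - xstar) - (y - xstar)"
  by (simp add: DeltaFP_def FP_affine)

lemma DeltaFP_eigenplane:
  assumes "y - xstar = p *\<^sub>R v1 + q *\<^sub>R v2"
  shows "DeltaFP FP y = ((l1 - 1) * p) *\<^sub>R v1 + ((l2 - 1) * q) *\<^sub>R v2"
  unfolding DeltaFP_eq assms L_eigenplane by (simp add: algebra_simps)

lemma inner_eigenplane:
  "(a1 *\<^sub>R v1 + a2 *\<^sub>R v2) \<bullet> (b1 *\<^sub>R v1 + b2 *\<^sub>R v2) = a1 * b1 * (v1 \<bullet> v1) + a2 * b2 * (v2 \<bullet> v2)"
  using orthogonal by (simp add: inner_add_left inner_add_right inner_commute[of v2 v1])

lemma eigenplane_coordinates_unique: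
  assumes "p *\<^sub>R v1 + q *\<^sub>R v2 = p' *\<^sub>R v1 + q' *\<^sub>R v2"
  shows "p = p'" and "q = q'"
proof -
  have "p * (v1 \<bullet> v1) = p' * (v1 \<bullet> v1)" "q * (v2 \<bullet> v2) = q' * (v2 \<bullet> v2)"
    using inner_eigenplane[of p q 1 0] inner_eigenplane[of p' q' 1 0]
      inner_eigenplane[of p q 0 1] inner_eigenplane[of p' q' 0 1] assms
    by simp_all
  thus "p = p'" "q = q'" using nonzero by simp_all
qed

lemma plain_step:
  assumes "even i" and ei: "x i - xstar = p *\<^sub>R v1 + q *\<^sub>R v2"
  shows "x (i + 1) - xstar = (l1 * p) *\<^sub>R v1 + (l2 * q) *\<^sub>R v2"
proof -
  have step: "x (i + 1) = FP (x i)"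
    using run \<open>even i\<close> unfolding AA_star1_run_def by blast
  show ?thesis unfolding step FP_affine ei by (simp add: L_eigenplane)
qed

lemma extrapolation_step:
  assumes "even i" and ei: "x i - xstar = p *\<^sub>R v1 + q *\<^sub>R v2"
  shows "x (i + 2) - xstar = (l1 * aa_damping (\<alpha> (i + 1)) l1 * p) *\<^sub>R v1
    + (l2 * aa_damping (\<alpha> (i + 1)) l2 * q) *\<^sub>R v2"
proof -
  let ?a = "\<alpha> (i + 1)"
  have extrapolate: "x (i + 2) = FP (x (i + 1)) + ?a *\<^sub>R (FP (x i) - FP (x (i + 1)))"
    using run \<open>even i\<close> unfolding AA_star1_run_def by blast
  have "x (i + 2) - xstar
      = L (x (i + 1) - xstar) + ?a *\<^sub>R (L (x i - xstar) - L (x (i + 1) - xstar))"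
    unfolding extrapolate FP_affine by (simp add: algebra_simps)
  also have "\<dots> = (l1 * (l1 * p) + ?a * (l1 * p - l1 * (l1 * p))) *\<^sub>R v1
      + (l2 * (l2 * q) + ?a * (l2 * q - l2 * (l2 * q))) *\<^sub>R v2"
    unfolding plain_step[OF assms] ei L_eigenplane by (rule scaleR_pair_affine_combination)
  also have "\<dots> = (l1 * aa_damping ?a l1 * p) *\<^sub>R v1 + (l2 * aa_damping ?a l2 * q) *\<^sub>R v2"
    by (simp add: aa_damping_def algebra_simps)
  finally show ?thesis .
qed

lemma normal_equation:
  assumes "even i" and ei: "x i - xstar = p *\<^sub>R v1 + q *\<^sub>R v2"
  shows "(v1 \<bullet> v1) * p^2 * (l1 - 1)^3 * aa_damping (\<alpha> (i + 1)) l1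
    + (v2 \<bullet> v2) * q^2 * (l2 - 1)^3 * aa_damping (\<alpha> (i + 1)) l2 = 0"
proof -
  let ?a = "\<alpha> (i + 1)"
  let ?u = "DeltaFP FP (x (i + 1))" and ?w = "DeltaFP FP (x i) - DeltaFP FP (x (i + 1))"
  have minimal: "\<And>\<beta>. norm (?u + ?a *\<^sub>R ?w) \<le> norm (?u + \<beta> *\<^sub>R ?w)"
    using run \<open>even i\<close> unfolding AA_star1_run_def by blast
  note residuals = DeltaFP_eigenplane[OF plain_step[OF assms]] DeltaFP_eigenplane[OF ei]
  have "?u + ?a *\<^sub>R ?w = ((l1 - 1) * (l1 * p) + ?a * ((l1 - 1) * p - (l1 - 1) * (l1 * p))) *\<^sub>R v1
      + ((l2 - 1) * (l2 * q) + ?a * ((l2 - 1) * q - (l2 - 1) * (l2 * q))) *\<^sub>R v2"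
    unfolding residuals by (rule scaleR_pair_affine_combination)
  also have "\<dots> = ((l1 - 1) * p * aa_damping ?a l1) *\<^sub>R v1
      + ((l2 - 1) * q * aa_damping ?a l2) *\<^sub>R v2"
    by (simp add: aa_damping_def algebra_simps)
  finally have "?u + ?a *\<^sub>R ?w = ((l1 - 1) * p * aa_damping ?a l1) *\<^sub>R v1
      + ((l2 - 1) * q * aa_damping ?a l2) *\<^sub>R v2" .
  moreover have "?w = (- ((l1 - 1)^2 * p)) *\<^sub>R v1 + (- ((l2 - 1)^2 * q)) *\<^sub>R v2"
    unfolding residuals scaleR_pair_diff by (simp add: power2_eq_square algebra_simps)
  ultimately have "((l1 - 1) * p * aa_damping ?a l1) * (- ((l1 - 1)^2 * p)) * (v1 \<bullet> v1)
      + ((l2 - 1) * q * aa_damping ?a l2) * (- ((l2 - 1)^2 * q)) * (v2 \<bullet> v2) = 0"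
    using least_squares_residual_orthogonal[OF minimal] by (simp only: inner_eigenplane)
  thus ?thesis by (simp add: power2_eq_square power3_eq_cube algebra_simps)
qed

lemma run_in_eigenplane: "\<exists>p q. x i - xstar = p *\<^sub>R v1 + q *\<^sub>R v2"
proof -
  have even_case: "\<exists>p q. x (2 * m) - xstar = p *\<^sub>R v1 + q *\<^sub>R v2" for m
  proof (induction m)
    case 0
    from start obtain p where "x0 - xstar - p *\<^sub>R v1 \<in> span {v2}"
      by (auto simp: span_breakdown_eq)
    then obtain q where "x0 - xstar - p *\<^sub>R v1 = q *\<^sub>R v2"
      by (auto simp: span_singleton)
    hence "x0 - xstar = p *\<^sub>R v1 + q *\<^sub>R v2"
      by (simp add: diff_eq_eq)
    moreover have "x 0 = x0" using run unfolding AA_star1_run_def by blast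
    ultimately show ?case by auto
  next
    case (Suc m)
    then obtain p q where "x (2 * m) - xstar = p *\<^sub>R v1 + q *\<^sub>R v2" by blast
    from extrapolation_step[OF _ this] show ?case by auto
  qed
  show ?thesis
  proof (cases "even i")
    case True
    then show ?thesis using even_case[of "i div 2"] by simp
  next
    case False
    then obtain m where "i = 2 * m + 1" by (rule oddE)
    with even_case[of m] plain_step[of "2 * m"] show ?thesis by auto
  qed
qed

lemma eigen_coordinates:
  obtains c1 c2 where "\<And>i. x i = xstar + c1 i *\<^sub>R v1 + c2 i *\<^sub>R v2"
    and "aa_eigen_recurrence (v1 \<bullet> v1) (v2 \<bullet> v2) l1 l2 \<alpha> c1 c2"
proof -
  from run_in_eigenplane obtain c1 c2
    where c: "\<And>i. x i - xstar = c1 i *\<^sub>R v1 + c2 i *\<^sub>R v2" by metis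
  have "aa_eigen_recurrence (v1 \<bullet> v1) (v2 \<bullet> v2) l1 l2 \<alpha> c1 c2"
  proof unfold_locales
    show "v1 \<bullet> v1 > 0" "v2 \<bullet> v2 > 0" using nonzero by simp_all
    fix i :: nat assume "even i"
    show "c1 (i + 1) = l1 * c1 i" "c2 (i + 1) = l2 * c2 i"
      using eigenplane_coordinates_unique[OF trans[OF c[symmetric] plain_step[OF \<open>even i\<close> c]]]
      by simp_all
    show "c1 (i + 2) = l1 * aa_damping (\<alpha> (i + 1)) l1 * c1 i"
      "c2 (i + 2) = l2 * aa_damping (\<alpha> (i + 1)) l2 * c2 i"
      using eigenplane_coordinates_unique[OF trans[OF c[symmetric] extrapolation_step[OF \<open>even i\<close> c]]]
      by simp_all
    show "(v1 \<bullet> v1) * (c1 i)^2 * (l1 - 1)^3 * aa_damping (\<alpha> (i + 1)) l1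
      + (v2 \<bullet> v2) * (c2 i)^2 * (l2 - 1)^3 * aa_damping (\<alpha> (i + 1)) l2 = 0"
      using normal_equation[OF \<open>even i\<close> c] .
  qed
  moreover have "x i = xstar + c1 i *\<^sub>R v1 + c2 i *\<^sub>R v2" for i
    using c[of i] by (simp add: algebra_simps)
  ultimately show ?thesis using that by blast
qed

end

lemma aa_contraction_factor_commute:
  "aa_contraction_factor l1 l2 = aa_contraction_factor l2 l1"
  by (simp add: aa_contraction_factor_def abs_minus_commute ac_simps)

lemma aa_contraction_factor_nonneg:
  assumes "l1 > 0" "l2 > 0"
  shows "aa_contraction_factor l1 l2 \<ge> 0"
  using assms by (simp add: aa_contraction_factor_def)

lemma aa_contraction_factor_less_one:
  assumes "l1 > 0" "l2 > 0" "l1 \<noteq> 1" "l2 \<noteq> 1" "\<not> (l1 > 1 \<and> l2 > 1)"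
  shows "aa_contraction_factor l1 l2 < 1"
proof -
  have "l1 * l2 * \<bar>l2 - l1\<bar> < l1 * \<bar>l1 - 1\<bar> + l2 * \<bar>l2 - 1\<bar>"
    if "0 < l1" "l1 \<le> l2" "l1 < 1" "l2 \<noteq> 1" for l1 l2 :: real
  proof (cases "l2 < 1")
    case True
    have "l2 * (l2 - l1) \<le> l2 - l1"
      using that True by (intro mult_left_le_one_le) auto
    hence "l1 * l2 * (l2 - l1) \<le> l1 * (1 - l1)"
      using that True by (simp add: mult.assoc mult_left_mono)
    also have "\<dots> < l1 * (1 - l1) + l2 * (1 - l2)"
      using that True by simp
    finally show ?thesis using that True by (simp add: abs_if)
  next
    case False
    have "l1 * (1 - l1) + l2 * (l2 - 1) - l1 * l2 * (l2 - l1) = (1 - l1) * (l2 - l1) * (l2 - 1)"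
      by algebra
    moreover have "(1 - l1) * (l2 - l1) * (l2 - 1) > 0" using that False by simp
    moreover have "\<bar>l1 - 1\<bar> = 1 - l1" "\<bar>l2 - 1\<bar> = l2 - 1" "\<bar>l2 - l1\<bar> = l2 - l1"
      using that False by auto
    ultimately show ?thesis by (simp only:)
  qed
  from this[of l1 l2] this[of l2 l1] have
    "l1 * l2 * \<bar>l2 - l1\<bar> < l1 * \<bar>l1 - 1\<bar> + l2 * \<bar>l2 - 1\<bar>"
    using assms by (cases "l1 \<le> l2") (auto simp: abs_minus_commute ac_simps)
  moreover have "l1 * \<bar>l1 - 1\<bar> + l2 * \<bar>l2 - 1\<bar> > 0"
    using assms by (intro add_pos_pos) auto
  ultimately show ?thesis by (simp add: aa_contraction_factor_def)
qed

lemma aa_damping_eq_of_normal_equation: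
  fixes w1 w2 l1 l2 a :: real
  assumes "w1 * (l1 - 1)^3 * aa_damping a l1 + w2 * (l2 - 1)^3 * aa_damping a l2 = 0"
  shows "(w1 * (l1 - 1)^4 + w2 * (l2 - 1)^4) * aa_damping a l1 = w2 * (l2 - 1)^3 * (l2 - l1)"
proof -
  have "(w1 * (l1 - 1)^4 + w2 * (l2 - 1)^4) * aa_damping a l1 - w2 * (l2 - 1)^3 * (l2 - l1)
      = (l1 - 1) * (w1 * (l1 - 1)^3 * aa_damping a l1 + w2 * (l2 - 1)^3 * aa_damping a l2)"
    unfolding aa_damping_def by algebra
  thus ?thesis using assms by simp
qed

lemma two_term_cauchy_schwarz:
  fixes X Y a b c d :: real
  shows "(a * c + b * d)^2 * X * Y \<le> (X * a^2 + Y * b^2) * (Y * c^2 + X * d^2)"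
proof -
  have "(X * a^2 + Y * b^2) * (Y * c^2 + X * d^2) - (a * c + b * d)^2 * X * Y
      = (X * a * d - Y * b * c)^2"
    by algebra
  thus ?thesis using zero_le_power2[of "X * a * d - Y * b * c"] by linarith
qed

lemma aa_two_cycles_gain_eq:
  fixes w1 w2 l1 l2 a b :: real
  assumes "w1 > 0" "w2 > 0" "l1 \<noteq> 1" "l2 \<noteq> 1" "l1 \<noteq> l2"
    and first: "w1 * (l1 - 1)^3 * aa_damping a l1 + w2 * (l2 - 1)^3 * aa_damping a l2 = 0"
    and second: "w1 * (l1 * aa_damping a l1)^2 * (l1 - 1)^3 * aa_damping b l1
      + w2 * (l2 * aa_damping a l2)^2 * (l2 - 1)^3 * aa_damping b l2 = 0"
  shows "l1^2 * aa_damping a l1 * aa_damping b l1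
      * (w1 * (l1 - 1)^4 + w2 * (l2 - 1)^4) * (l1^2 * w2 * (l2 - 1)^2 + l2^2 * w1 * (l1 - 1)^2)
    = l1^2 * l2^2 * (l2 - l1)^2 * w1 * w2 * (l1 - 1)^2 * (l2 - 1)^2"
proof -
  \<comment> \<open>Each normal equation fixes its damping factors up to a common denominator; substituting
     the first into the second and cancelling w1 w2 m1^4 m2^4 delta^2 leaves the gain.\<close>
  define m1 m2 \<delta> where "m1 = l1 - 1" and "m2 = l2 - 1" and "\<delta> = l2 - l1"
  define d1 d2 e1 where "d1 = aa_damping a l1" and "d2 = aa_damping a l2" and "e1 = aa_damping b l1"
  define D D' where "D = w1 * m1^4 + w2 * m2^4"
    and "D' = w1 * (l1 * d1)^2 * m1^4 + w2 * (l2 * d2)^2 * m2^4"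
  define P where "P = l1^2 * w2 * m2^2 + l2^2 * w1 * m1^2"
  have D_d1: "D * d1 = w2 * m2^3 * \<delta>"
    using aa_damping_eq_of_normal_equation[OF first] by (simp add: D_def d1_def m1_def m2_def \<delta>_def)
  have D_d2: "D * d2 = - (w1 * m1^3 * \<delta>)"
    using aa_damping_eq_of_normal_equation[of w2 l2 a w1 l1] first
    by (simp add: D_def d2_def m1_def m2_def \<delta>_def add.commute) (simp add: algebra_simps)
  have D'_e1: "D' * e1 = w2 * (l2 * d2)^2 * m2^3 * \<delta>"
    using aa_damping_eq_of_normal_equation[of "w1 * (l1 * d1)^2" l1 b "w2 * (l2 * d2)^2" l2] second
    by (simp add: D'_def d1_def d2_def e1_def m1_def m2_def \<delta>_def mult_ac)
  have "D^2 * D' = w1 * l1^2 * (D * d1)^2 * m1^4 + w2 * l2^2 * (D * d2)^2 * m2^4"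
    unfolding D'_def by algebra
  also have "\<dots> = (w1 * w2 * m1^4 * m2^4 * \<delta>^2) * P"
    unfolding D_d1 D_d2 P_def by algebra
  finally have D'_eq: "D^2 * D' = (w1 * w2 * m1^4 * m2^4 * \<delta>^2) * P" .
  have "(w1 * w2 * m1^4 * m2^4 * \<delta>^2) * (l1^2 * d1 * e1 * D * P) = l1^2 * d1 * e1 * D^3 * D'"
    using D'_eq by algebra
  also have "\<dots> = l1^2 * (D * d1) * (D' * e1) * D^2"
    by algebra
  also have "\<dots> = l1^2 * w2^2 * l2^2 * m2^6 * \<delta>^2 * (D * d2)^2"
    unfolding D_d1 D'_e1 by algebra
  also have "\<dots> = (w1 * w2 * m1^4 * m2^4 * \<delta>^2) * (l1^2 * l2^2 * \<delta>^2 * w1 * w2 * m1^2 * m2^2)"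
    unfolding D_d2 by algebra
  finally have "l1^2 * d1 * e1 * D * P = l1^2 * l2^2 * \<delta>^2 * w1 * w2 * m1^2 * m2^2"
    using assms(1-5) by (simp add: m1_def m2_def \<delta>_def)
  thus ?thesis by (simp add: D_def P_def d1_def e1_def m1_def m2_def \<delta>_def)
qed

lemma aa_two_cycles_gain_bound:
  fixes w1 w2 l1 l2 a b :: real
  assumes "w1 > 0" "w2 \<ge> 0" "l1 > 0" "l2 > 0" "l1 \<noteq> 1" "l2 \<noteq> 1"
    and first: "w1 * (l1 - 1)^3 * aa_damping a l1 + w2 * (l2 - 1)^3 * aa_damping a l2 = 0"
    and second: "w1 * (l1 * aa_damping a l1)^2 * (l1 - 1)^3 * aa_damping b l1
      + w2 * (l2 * aa_damping a l2)^2 * (l2 - 1)^3 * aa_damping b l2 = 0"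
  shows "\<bar>l1^2 * aa_damping a l1 * aa_damping b l1\<bar> \<le> aa_contraction_factor l1 l2 ^ 2"
proof (cases "w2 = 0 \<or> l1 = l2")
  case True
  have "w1 * (l1 - 1)^4 + w2 * (l2 - 1)^4 > 0"
    using assms(1,2,5) by (intro add_pos_nonneg) auto
  with aa_damping_eq_of_normal_equation[OF first] True have "aa_damping a l1 = 0"
    by auto
  thus ?thesis by simp
next
  case False
  define X Y where "X = w1 * (l1 - 1)^2" and "Y = w2 * (l2 - 1)^2"
  define D P where "D = X * (l1 - 1)^2 + Y * (l2 - 1)^2" and "P = Y * l1^2 + X * l2^2"
  define M where "M = \<bar>l1 - 1\<bar> * l1 + \<bar>l2 - 1\<bar> * l2"
  define G where "G = l1^2 * aa_damping a l1 * aa_damping b l1"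
  have "X > 0" "Y > 0" "M > 0" using assms False by (auto simp: X_def Y_def M_def add_pos_pos)
  hence "D > 0" "P > 0" using assms by (auto simp: D_def P_def add_pos_pos)
  have "G * (D * P) = l1^2 * l2^2 * (l2 - l1)^2 * (X * Y)"
    using aa_two_cycles_gain_eq[OF assms(1) _ assms(5,6) _ first second] False assms(2)
    by (simp add: G_def D_def P_def X_def Y_def power4_eq_xxxx power2_eq_square mult_ac)
  hence G_eq: "G = l1^2 * l2^2 * (l2 - l1)^2 * (X * Y) / (D * P)"
    using \<open>D > 0\<close> \<open>P > 0\<close> by (simp add: eq_divide_eq)
  have "M^2 * (X * Y) \<le> D * P"
    using two_term_cauchy_schwarz[of "\<bar>l1 - 1\<bar>" l1 "\<bar>l2 - 1\<bar>" l2 X Y]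
    by (simp add: D_def P_def M_def mult_ac)
  hence "G \<le> l1^2 * l2^2 * (l2 - l1)^2 * (X * Y) / (M^2 * (X * Y))"
    unfolding G_eq using \<open>X > 0\<close> \<open>Y > 0\<close> \<open>M > 0\<close> \<open>D > 0\<close> \<open>P > 0\<close>
    by (intro divide_left_mono) auto
  also have "\<dots> = aa_contraction_factor l1 l2 ^ 2"
    using \<open>X > 0\<close> \<open>Y > 0\<close>
    by (simp add: aa_contraction_factor_def M_def power_divide power_mult_distrib mult_ac)
  finally show ?thesis
    unfolding G_def[symmetric] using G_eq \<open>X > 0\<close> \<open>Y > 0\<close> \<open>D > 0\<close> \<open>P > 0\<close> by simp
qed

lemma aa_two_cycles_contract:
  fixes n1 n2 l1 l2 c1 c2 a b :: real
  assumes "n1 > 0" "n2 > 0" "l1 > 0" "l2 > 0" "l1 \<noteq> 1" "l2 \<noteq> 1"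
    and first: "n1 * c1^2 * (l1 - 1)^3 * aa_damping a l1
      + n2 * c2^2 * (l2 - 1)^3 * aa_damping a l2 = 0"
    and second: "n1 * (l1 * aa_damping a l1 * c1)^2 * (l1 - 1)^3 * aa_damping b l1
      + n2 * (l2 * aa_damping a l2 * c2)^2 * (l2 - 1)^3 * aa_damping b l2 = 0"
  shows "\<bar>l1 * aa_damping b l1 * (l1 * aa_damping a l1 * c1)\<bar>
    \<le> aa_contraction_factor l1 l2 ^ 2 * \<bar>c1\<bar>"
proof (cases "c1 = 0")
  case False
  have "\<bar>l1^2 * aa_damping a l1 * aa_damping b l1\<bar> \<le> aa_contraction_factor l1 l2 ^ 2"
  proof (rule aa_two_cycles_gain_bound[OF _ _ assms(3-6)])
    show "n1 * c1^2 > 0" "n2 * c2^2 \<ge> 0" using assms(1,2) False by auto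
    show "n1 * c1^2 * (l1 - 1)^3 * aa_damping a l1
      + n2 * c2^2 * (l2 - 1)^3 * aa_damping a l2 = 0" by (rule first)
    show "n1 * c1^2 * (l1 * aa_damping a l1)^2 * (l1 - 1)^3 * aa_damping b l1
      + n2 * c2^2 * (l2 * aa_damping a l2)^2 * (l2 - 1)^3 * aa_damping b l2 = 0"
      using second by (simp add: power_mult_distrib mult_ac)
  qed
  hence "\<bar>l1^2 * aa_damping a l1 * aa_damping b l1\<bar> * \<bar>c1\<bar>
      \<le> aa_contraction_factor l1 l2 ^ 2 * \<bar>c1\<bar>"
    by (rule mult_right_mono) simp
  thus ?thesis by (simp add: abs_mult power2_eq_square mult_ac)
qed simp

lemma periodic_contraction_tendsto_zero:
  fixes f :: "nat \<Rightarrow> real"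
  assumes nonneg: "\<And>n. f n \<ge> 0" and contract: "\<And>n. f (n + p) \<le> q * f n"
    and "p > 0" "0 \<le> q" "q < 1"
  shows "f \<longlonglongrightarrow> 0"
proof -
  define C where "C = Max (f ` {..<p})"
  have iterate: "f (p * m + r) \<le> q^m * f r" for m r
  proof (induction m)
    case (Suc m)
    have "f (p * Suc m + r) \<le> q * f (p * m + r)"
      using contract[of "p * m + r"] by (simp add: algebra_simps)
    also have "\<dots> \<le> q * (q^m * f r)"
      using Suc \<open>0 \<le> q\<close> by (rule mult_left_mono)
    finally show ?case by (simp add: mult.assoc)
  qed simp
  have bound: "f n \<le> q^(n div p) * C" for n
  proof -
    have "f n \<le> q^(n div p) * f (n mod p)"
      using iterate[of "n div p" "n mod p"] by simp
    also have "\<dots> \<le> q^(n div p) * C"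
      using \<open>p > 0\<close> \<open>0 \<le> q\<close> by (intro mult_left_mono) (auto simp: C_def)
    finally show ?thesis .
  qed
  have div_lim: "filterlim (\<lambda>n. n div p) sequentially sequentially"
    unfolding filterlim_at_top
  proof
    fix m
    have "m \<le> n div p" if "p * m \<le> n" for n
      using div_le_mono[OF that, of p] \<open>p > 0\<close> by simp
    with eventually_ge_at_top[of "p * m"] show "eventually (\<lambda>n. m \<le> n div p) sequentially"
      by (rule eventually_mono)
  qed
  have "(\<lambda>m. q^m) \<longlonglongrightarrow> 0"
    using assms(4,5) by (intro LIMSEQ_power_zero) simp
  from filterlim_compose[OF this div_lim] have "(\<lambda>n. q^(n div p) * C) \<longlonglongrightarrow> 0"
    by (rule tendsto_mult_left_zero)
  thus ?thesis
    by (rule Lim_null_comparison[rotated]) (use bound nonneg in auto)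
qed

context aa_eigen_recurrence
begin

lemma four_steps_contract_even:
  assumes "l1 > 0" "l2 > 0" "l1 \<noteq> 1" "l2 \<noteq> 1" "even i"
  shows "\<bar>c1 (i + 4)\<bar> \<le> aa_contraction_factor l1 l2 ^ 2 * \<bar>c1 i\<bar>"
    and "\<bar>c2 (i + 4)\<bar> \<le> aa_contraction_factor l1 l2 ^ 2 * \<bar>c2 i\<bar>"
proof -
  have "even (i + 2)" and shift: "i + 2 + 1 = i + 3" "i + 2 + 2 = i + 4"
    using \<open>even i\<close> by simp_all
  note step = extrapolation_step[OF \<open>even i\<close>] extrapolation_step[OF \<open>even (i + 2)\<close>, unfolded shift]
  note first = normal_equation[OF \<open>even i\<close>]
    normal_equation[OF \<open>even (i + 2)\<close>, unfolded shift extrapolation_step[OF \<open>even i\<close>]]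
  show "\<bar>c1 (i + 4)\<bar> \<le> aa_contraction_factor l1 l2 ^ 2 * \<bar>c1 i\<bar>"
    unfolding step using aa_two_cycles_contract[OF weights_pos assms(1-4) first] .
  have first_swapped:
    "n2 * c2 i^2 * (l2 - 1)^3 * aa_damping (\<alpha> (i + 1)) l2
      + n1 * c1 i^2 * (l1 - 1)^3 * aa_damping (\<alpha> (i + 1)) l1 = 0"
    "n2 * (l2 * aa_damping (\<alpha> (i + 1)) l2 * c2 i)^2 * (l2 - 1)^3 * aa_damping (\<alpha> (i + 3)) l2
      + n1 * (l1 * aa_damping (\<alpha> (i + 1)) l1 * c1 i)^2 * (l1 - 1)^3 * aa_damping (\<alpha> (i + 3)) l1 = 0"
    using first by linarith+
  show "\<bar>c2 (i + 4)\<bar> \<le> aa_contraction_factor l1 l2 ^ 2 * \<bar>c2 i\<bar>"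
    unfolding step aa_contraction_factor_commute[of l1]
    using aa_two_cycles_contract[OF weights_pos(2,1) assms(2,1,4,3) first_swapped] .
qed

lemma four_steps_contract:
  assumes "l1 > 0" "l2 > 0" "l1 \<noteq> 1" "l2 \<noteq> 1"
  shows "\<bar>c1 (i + 4)\<bar> \<le> aa_contraction_factor l1 l2 ^ 2 * \<bar>c1 i\<bar>"
    and "\<bar>c2 (i + 4)\<bar> \<le> aa_contraction_factor l1 l2 ^ 2 * \<bar>c2 i\<bar>"
proof -
  let ?q = "aa_contraction_factor l1 l2 ^ 2"
  have "\<bar>c1 (i + 4)\<bar> \<le> ?q * \<bar>c1 i\<bar> \<and> \<bar>c2 (i + 4)\<bar> \<le> ?q * \<bar>c2 i\<bar>"
  proof (cases "even i")
    case True
    thus ?thesis using four_steps_contract_even[OF assms] by blast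
  next
    case False
    then obtain k where "i = 2 * k + 1" by (rule oddE)
    define j where "j = 2 * k"
    have "even j" and i: "i = j + 1" using \<open>i = 2 * k + 1\<close> by (simp_all add: j_def)
    have "even (j + 4)" using \<open>even j\<close> by simp
    have shift: "\<bar>c (j + 5)\<bar> \<le> ?q * \<bar>c (j + 1)\<bar>"
      if "l > 0" "c (j + 1) = l * c j" "c (j + 4 + 1) = l * c (j + 4)"
        "\<bar>c (j + 4)\<bar> \<le> ?q * \<bar>c j\<bar>" for c :: "nat \<Rightarrow> real" and l
    proof -
      have "\<bar>c (j + 5)\<bar> = l * \<bar>c (j + 4)\<bar>"
        using that(1,3) by (simp add: abs_mult eval_nat_numeral)
      also have "\<dots> \<le> l * (?q * \<bar>c j\<bar>)"
        using that(1,4) by (simp add: mult_le_cancel_left_pos)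
      also have "\<dots> = ?q * \<bar>c (j + 1)\<bar>"
        using that(1,2) by (simp add: abs_mult)
      finally show ?thesis .
    qed
    have "j + 1 + 4 = j + 5" by simp
    show ?thesis unfolding i \<open>j + 1 + 4 = j + 5\<close> using
      shift[OF assms(1) plain_step(1)[OF \<open>even j\<close>] plain_step(1)[OF \<open>even (j + 4)\<close>]
        four_steps_contract_even(1)[OF assms \<open>even j\<close>]]
      shift[OF assms(2) plain_step(2)[OF \<open>even j\<close>] plain_step(2)[OF \<open>even (j + 4)\<close>]
        four_steps_contract_even(2)[OF assms \<open>even j\<close>]]
    by (rule conjI)
  qed
  thus "\<bar>c1 (i + 4)\<bar> \<le> ?q * \<bar>c1 i\<bar>" "\<bar>c2 (i + 4)\<bar> \<le> ?q * \<bar>c2 i\<bar>" by simp_all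
qed

lemma tendsto_zero:
  assumes "l1 > 0" "l2 > 0" "l1 \<noteq> 1" "l2 \<noteq> 1" "\<not> (l1 > 1 \<and> l2 > 1)"
  shows "c1 \<longlonglongrightarrow> 0" and "c2 \<longlonglongrightarrow> 0"
proof -
  let ?q = "aa_contraction_factor l1 l2 ^ 2"
  have "0 \<le> ?q" "?q < 1"
    using aa_contraction_factor_nonneg[OF assms(1,2)] aa_contraction_factor_less_one[OF assms]
    by (simp_all add: power_less_one_iff)
  have "(\<lambda>i. \<bar>c1 i\<bar>) \<longlonglongrightarrow> 0" "(\<lambda>i. \<bar>c2 i\<bar>) \<longlonglongrightarrow> 0"
    by (rule periodic_contraction_tendsto_zero[of _ 4 ?q];
        use four_steps_contract[OF assms(1-4)] \<open>0 \<le> ?q\<close> \<open>?q < 1\<close> in simp)+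
  thus "c1 \<longlonglongrightarrow> 0" "c2 \<longlonglongrightarrow> 0" by (simp_all add: tendsto_rabs_zero_iff)
qed

end

lemma pos_def_matrix_eigenvalue_pos:
  assumes "pos_def_matrix A" "v \<noteq> 0" "A *v v = l *\<^sub>R v"
  shows "l > 0"
proof -
  have "0 < v \<bullet> (A *v v)" using assms(1,2) unfolding pos_def_matrix_def by blast
  also have "\<dots> = l * (v \<bullet> v)" using assms(3) by simp
  finally have "0 < l * (v \<bullet> v)" .
  moreover have "v \<bullet> v > 0" using assms(2) by simp
  ultimately show ?thesis by (simp add: zero_less_mult_iff)
qed

theorem corollary6:
  fixes A :: "real^'n^'n" and b xstar x0 v1 v2 :: "real^'n"
    and lam1 lam2 :: real and x :: "nat \<Rightarrow> real^'n" and \<alpha> :: "nat \<Rightarrow> real"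
  assumes "CARD('n) > 1"
    and "pos_def_matrix A"
    and "invertible (mat 1 - A)"
    and "A *v xstar + b = xstar"
    and "v1 \<noteq> 0" and "v2 \<noteq> 0" and "v1 \<bullet> v2 = 0"
    and "A *v v1 = lam1 *\<^sub>R v1" and "A *v v2 = lam2 *\<^sub>R v2"
    and "\<not> (lam1 > 1 \<and> lam2 > 1)"
    and "lam1 \<noteq> 1" and "lam2 \<noteq> 1"
    and "x0 - xstar \<in> span {v1, v2}"
    and "AA_star1_run (\<lambda>y. A *v y + b) x0 x \<alpha>"
  shows "x \<longlonglongrightarrow> xstar"
proof -
  have "lam1 > 0" "lam2 > 0"
    using pos_def_matrix_eigenvalue_pos assms(2,5,6,8,9) by blast+
  have run: "aa_eigenplane_run (\<lambda>y. A *v y + b) ((*v) A) xstar x0 v1 v2 lam1 lam2 x \<alpha>"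
  proof (rule aa_eigenplane_run.intro)
    show "A *v y + b = xstar + A *v (y - xstar)" for y
      using assms(4) by (simp add: matrix_vector_mult_diff_distrib algebra_simps)
  qed (use assms(5-9,13,14) in simp_all)
  obtain c1 c2 where x: "\<And>i. x i = xstar + c1 i *\<^sub>R v1 + c2 i *\<^sub>R v2"
    and recurrence: "aa_eigen_recurrence (v1 \<bullet> v1) (v2 \<bullet> v2) lam1 lam2 \<alpha> c1 c2"
    using aa_eigenplane_run.eigen_coordinates[OF run] by blast
  have "c1 \<longlonglongrightarrow> 0" "c2 \<longlonglongrightarrow> 0"
    using aa_eigen_recurrence.tendsto_zero[OF recurrence \<open>lam1 > 0\<close> \<open>lam2 > 0\<close> assms(11,12,10)]
    by simp_all
  hence "(\<lambda>i. xstar + c1 i *\<^sub>R v1 + c2 i *\<^sub>R v2) \<longlonglongrightarrow> xstar + 0 *\<^sub>R v1 + 0 *\<^sub>R v2"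
    by (intro tendsto_intros)
  thus ?thesis unfolding x[abs_def] by simp
qed

end
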